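(* Let $B$ be a path-connected space, $b_0\in B$, and let $p\colon E\to B$ be a disk-hedgehog covering. Then for every small loop $\alpha$ at $b_0$, the class $[\alpha]$ is the neutral element of the monodromy group $\pi(p,b_0)$.
   Context: All maps are continuous; a Peano space is a connected, locally path-connected space. For a class $\mathcal{P}$ of spaces, $p\colon E\to B$ is a $\mathcal{P}$-covering if for every $e_0\in E$, $X\in\mathcal{P}$, $x_0\in X$ and map $f\colon X\to B$ with $f(x_0)=p(e_0)$ there is a unique map $g\colon X\to E$ with $p\circ g=f$, $g(x_0)=e_0$. A directed wedge is $(Z,z_0)=\bigvee_{s\in S}(Z_s,z_s)$, a wedge of pointed Peano spaces indexed by a directed set $S$, topologized so that $U\subset Z\setminus\{z_0\}$ is open iff each $U\cap Z_s$ is open, and $U\ni z_0$ is an open neighborhood of $z_0$ iff each $U\cap Z_s$ is open and there is $t\in S$ with $Z_s\subset U$ for all $s>t$. A disk-hedgehog is a directed wedge with each $Z_s\cong D^2$; a disk-hedgehog covering is a $\mathcal{P}$-covering for $\mathcal{P}$ the class of all disk-hedgehogs (paths lift uniquely). The monodromy group $\pi(p,b_0)$ is the set of loops at $b_0$ modulo $\alpha\sim\beta$ iff any lifts $\tilde\alpha,\tilde\beta$ with $\tilde\alpha(0)=\tilde\beta(0)$ satisfy $\tilde\alpha(1)=\tilde\beta(1)$, with product induced by concatenation; $[\alpha]$ is neutral iff all lifts of $\alpha$ are loops. A loop $\alpha$ at $b_0$ is small if for every neighborhood $U$ of $b_0$ in $B$, $\alpha$ is homotopic relative to $\{0,1\}$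 (endpoints fixed at $b_0$) to a loop contained in $U$. *)

theory Defs
  imports "HOL-Analysis.Analysis"
begin

text \<open>The closed disk is modelled as the closed unit disk of the complex plane.
A directed wedge of pointed disks indexed by a directed set (S, R) (R a preorder
on S in which any two elements have an upper bound), the disk with index s being
pointed at zb s, is modelled on the type ('i \<times> complex) option: None is the wedge
point, and Some (s, z) is the point z \<noteq> zb s of the disk with index s.\<close>

definition directed_set :: "'i set \<Rightarrow> ('i \<Rightarrow> 'i \<Rightarrow> bool) \<Rightarrow> bool" where
  "directed_set S R \<longleftrightarrow> S \<noteq> {} \<and> (\<forall>s\<in>S. R s s)
     \<and> (\<forall>a\<in>S. \<forall>b\<in>S. \<forall>c\<in>S. R a b \<and> R b c \<longrightarrow> R a c)
     \<and> (\<forall>a\<in>S. \<forall>b\<in>S. \<exists>c\<in>S. R a c \<and> R b c)"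

definition strictly_above :: "('i \<Rightarrow> 'i \<Rightarrow> bool) \<Rightarrow> 'i \<Rightarrow> 'i \<Rightarrow> bool" where
  "strictly_above R s t \<longleftrightarrow> R t s \<and> \<not> R s t"

definition hedgehog_carrier :: "'i set \<Rightarrow> ('i \<Rightarrow> complex) \<Rightarrow> ('i \<times> complex) option set" where
  "hedgehog_carrier S zb = insert None {Some (s, z) | s z. s \<in> S \<and> z \<in> cball 0 1 \<and> z \<noteq> zb s}"

definition spike :: "('i \<Rightarrow> complex) \<Rightarrow> 'i \<Rightarrow> complex \<Rightarrow> ('i \<times> complex) option" where
  "spike zb s z = (if z = zb s then None else Some (s, z))"

definition hedgehog_top :: "'i set \<Rightarrow> ('i \<Rightarrow> 'i \<Rightarrow> bool) \<Rightarrow> ('i \<Rightarrow> complex)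
    \<Rightarrow> ('i \<times> complex) option topology" where
  "hedgehog_top S R zb = topology (\<lambda>U. U \<subseteq> hedgehog_carrier S zb
      \<and> (\<forall>s\<in>S. openin (top_of_set (cball 0 1)) {z \<in> cball 0 1. spike zb s z \<in> U})
      \<and> (None \<in> U \<longrightarrow> (\<exists>t\<in>S. \<forall>s\<in>S. strictly_above R s t \<longrightarrow> spike zb s ` cball 0 1 \<subseteq> U)))"

definition is_disk_hedgehog :: "('i \<times> complex) option topology \<Rightarrow> bool" where
  "is_disk_hedgehog X \<longleftrightarrow> (\<exists>S R zb. directed_set S R \<and> (\<forall>s\<in>S. zb s \<in> cball 0 1)
      \<and> X = hedgehog_top S R zb)"

definition P_covering :: "('x topology \<Rightarrow> bool) \<Rightarrow> 'e topology \<Rightarrow> 'b topology \<Rightarrow> ('e \<Rightarrow> 'b) \<Rightarrow> bool" where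
  "P_covering P E B p \<longleftrightarrow> continuous_map E B p \<and>
     (\<forall>e0\<in>topspace E. \<forall>X x0 f. P X \<and> x0 \<in> topspace X \<and> continuous_map X B f \<and> f x0 = p e0 \<longrightarrow>
        (\<exists>g. continuous_map X E g \<and> (\<forall>x\<in>topspace X. p (g x) = f x) \<and> g x0 = e0 \<and>
           (\<forall>g'. continuous_map X E g' \<and> (\<forall>x\<in>topspace X. p (g' x) = f x) \<and> g' x0 = e0
                 \<longrightarrow> (\<forall>x\<in>topspace X. g' x = g x))))"

text \<open>Since a
class of spaces cannot range over all types, the index sets are taken to be sets of
subsets of B (large enough e.g. for directed sets of neighbourhoods).\<close>
definition disk_hedgehog_covering :: "'e topology \<Rightarrow> 'b topology \<Rightarrow> ('e \<Rightarrow> 'b) \<Rightarrow> bool" where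
  "disk_hedgehog_covering E B p \<longleftrightarrow>
     P_covering (is_disk_hedgehog :: ('b set \<times> complex) option topology \<Rightarrow> bool) E B p"

definition is_lift :: "'e topology \<Rightarrow> ('e \<Rightarrow> 'b) \<Rightarrow> (real \<Rightarrow> 'b) \<Rightarrow> (real \<Rightarrow> 'e) \<Rightarrow> bool" where
  "is_lift E p \<alpha> a \<longleftrightarrow> pathin E a \<and> (\<forall>t\<in>{0..1}. p (a t) = \<alpha> t)"

definition loop_at :: "'b topology \<Rightarrow> 'b \<Rightarrow> (real \<Rightarrow> 'b) \<Rightarrow> bool" where
  "loop_at B b0 \<alpha> \<longleftrightarrow> pathin B \<alpha> \<and> \<alpha> 0 = b0 \<and> \<alpha> 1 = b0"

definition monodromy_equiv :: "'e topology \<Rightarrow> ('e \<Rightarrow> 'b) \<Rightarrow> (real \<Rightarrow> 'b) \<Rightarrow> (real \<Rightarrow> 'b) \<Rightarrow> bool" where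
  "monodromy_equiv E p \<alpha> \<beta> \<longleftrightarrow>
     (\<forall>a b. is_lift E p \<alpha> a \<and> is_lift E p \<beta> b \<and> a 0 = b 0 \<longrightarrow> a 1 = b 1)"

text \<open>[\<alpha>] is the neutral element of \<pi>(p,b0): all lifts of \<alpha> are loops.\<close>
definition monodromy_neutral :: "'e topology \<Rightarrow> ('e \<Rightarrow> 'b) \<Rightarrow> (real \<Rightarrow> 'b) \<Rightarrow> bool" where
  "monodromy_neutral E p \<alpha> \<longleftrightarrow> (\<forall>a. is_lift E p \<alpha> a \<longrightarrow> a 1 = a 0)"

definition small_loop :: "'b topology \<Rightarrow> 'b \<Rightarrow> (real \<Rightarrow> 'b) \<Rightarrow> bool" where
  "small_loop B b0 \<alpha> \<longleftrightarrow> loop_at B b0 \<alpha> \<and>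
     (\<forall>U. openin B U \<and> b0 \<in> U \<longrightarrow>
        (\<exists>\<beta>. loop_at B b0 \<beta> \<and> \<beta> ` {0..1} \<subseteq> U \<and>
            homotopic_with (\<lambda>h. h 0 = b0 \<and> h 1 = b0) (top_of_set {0..1}) B \<alpha> \<beta>))"

end

theory Submission
  imports Defs
begin

text \<open>
  A single closed disk is a disk-hedgehog, so a disk-hedgehog covering lifts maps from every retract
  of the disk uniquely; this gives unique path lifting and the lifting of homotopies of loops relative
  to their endpoints. Unique path lifting also shows that two points of a fibre cannot be
  topologically indistinguishable from one side.

  If b0 has a smallest open neighbourhood T, a small loop is homotopic to a loop inside T, and such a
  loop is null-homotopic. Otherwise the open neighbourhoods of b0, ordered by reverse inclusion, form
  a directed set without maximal elements. Choosing in every neighbourhood U a loop homotopic to the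
  given one and placing these loops on the spikes of a hedgehog indexed by the neighbourhoods gives a
  continuous map into B. Its lift sends the far end of every spike to the endpoint of the lift of the
  given loop, and continuity at the wedge point puts that endpoint into every neighbourhood of the
  starting point; hence the two coincide.
\<close>

section \<open>Topology of a hedgehog\<close>

definition hedgehog_open
    :: "'i set \<Rightarrow> ('i \<Rightarrow> 'i \<Rightarrow> bool) \<Rightarrow> ('i \<Rightarrow> complex) \<Rightarrow> ('i \<times> complex) option set \<Rightarrow> bool" where
  "hedgehog_open S R zb U \<longleftrightarrow> U \<subseteq> hedgehog_carrier S zb
      \<and> (\<forall>s\<in>S. openin (top_of_set (cball 0 1)) {z \<in> cball 0 1. spike zb s z \<in> U})
      \<and> (None \<in> U \<longrightarrow> (\<exists>t\<in>S. \<forall>s\<in>S. strictly_above R s t \<longrightarrow> spike zb s ` cball 0 1 \<subseteq> U))"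

lemma strictly_above_trans:
  assumes "directed_set S R" "s \<in> S" "t \<in> S" "u \<in> S" "R t u" "strictly_above R s u"
  shows "strictly_above R s t"
  using assms unfolding directed_set_def strictly_above_def by meson

lemma hedgehog_openD:
  assumes "hedgehog_open S R zb U"
  shows "U \<subseteq> hedgehog_carrier S zb"
    and "s \<in> S \<Longrightarrow> openin (top_of_set (cball 0 1)) {z \<in> cball 0 1. spike zb s z \<in> U}"
    and "None \<in> U \<Longrightarrow> \<exists>t\<in>S. \<forall>s\<in>S. strictly_above R s t \<longrightarrow> spike zb s ` cball 0 1 \<subseteq> U"
  using assms by (simp_all add: hedgehog_open_def)

lemma hedgehog_open_Int:
  assumes "directed_set S R" and U: "hedgehog_open S R zb U" and V: "hedgehog_open S R zb V"
  shows "hedgehog_open S R zb (U \<inter> V)"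
  unfolding hedgehog_open_def
proof (intro conjI ballI impI)
  show "U \<inter> V \<subseteq> hedgehog_carrier S zb"
    using hedgehog_openD(1)[OF U] by blast
next
  fix s assume "s \<in> S"
  have "{z \<in> cball 0 1. spike zb s z \<in> U \<inter> V}
      = {z \<in> cball 0 1. spike zb s z \<in> U} \<inter> {z \<in> cball 0 1. spike zb s z \<in> V}"
    by blast
  then show "openin (top_of_set (cball 0 1)) {z \<in> cball 0 1. spike zb s z \<in> U \<inter> V}"
    using hedgehog_openD(2)[OF U \<open>s \<in> S\<close>] hedgehog_openD(2)[OF V \<open>s \<in> S\<close>]
    by (simp only: openin_Int)
next
  assume "None \<in> U \<inter> V"
  then obtain t1 t2 where t1: "t1 \<in> S" "\<forall>s\<in>S. strictly_above R s t1 \<longrightarrow> spike zb s ` cball 0 1 \<subseteq> U"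
    and t2: "t2 \<in> S" "\<forall>s\<in>S. strictly_above R s t2 \<longrightarrow> spike zb s ` cball 0 1 \<subseteq> V"
    using hedgehog_openD(3)[OF U] hedgehog_openD(3)[OF V] by blast
  obtain t where t: "t \<in> S" "R t1 t" "R t2 t"
    using assms(1) t1(1) t2(1) unfolding directed_set_def by blast
  show "\<exists>t\<in>S. \<forall>s\<in>S. strictly_above R s t \<longrightarrow> spike zb s ` cball 0 1 \<subseteq> U \<inter> V"
  proof (intro bexI ballI impI)
    fix s assume "s \<in> S" "strictly_above R s t"
    then have "strictly_above R s t1" "strictly_above R s t2"
      using strictly_above_trans[OF assms(1)] t t1(1) t2(1) by blast+
    then show "spike zb s ` cball 0 1 \<subseteq> U \<inter> V"
      using t1(2) t2(2) \<open>s \<in> S\<close> by blast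
  qed (fact t(1))
qed

lemma hedgehog_open_Union:
  assumes \<K>: "\<forall>U\<in>\<K>. hedgehog_open S R zb U"
  shows "hedgehog_open S R zb (\<Union>\<K>)"
  unfolding hedgehog_open_def
proof (intro conjI ballI impI)
  show "\<Union>\<K> \<subseteq> hedgehog_carrier S zb"
    using \<K> hedgehog_openD(1) by blast
next
  fix s assume "s \<in> S"
  have "{z \<in> cball 0 1. spike zb s z \<in> \<Union>\<K>} = (\<Union>U\<in>\<K>. {z \<in> cball 0 1. spike zb s z \<in> U})"
    by blast
  moreover have "openin (top_of_set (cball 0 1)) (\<Union>U\<in>\<K>. {z \<in> cball 0 1. spike zb s z \<in> U})"
    using \<K> hedgehog_openD(2)[OF _ \<open>s \<in> S\<close>] by (intro openin_Union) blast
  ultimately show "openin (top_of_set (cball 0 1)) {z \<in> cball 0 1. spike zb s z \<in> \<Union>\<K>}"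
    by (simp only:)
next
  assume "None \<in> \<Union>\<K>"
  then obtain U where "U \<in> \<K>" "None \<in> U"
    by blast
  with \<K> obtain t where "t \<in> S" "\<forall>s\<in>S. strictly_above R s t \<longrightarrow> spike zb s ` cball 0 1 \<subseteq> U"
    using hedgehog_openD(3) by blast
  with \<open>U \<in> \<K>\<close> show "\<exists>t\<in>S. \<forall>s\<in>S. strictly_above R s t \<longrightarrow> spike zb s ` cball 0 1 \<subseteq> \<Union>\<K>"
    by blast
qed

lemma istopology_hedgehog_open:
  "directed_set S R \<Longrightarrow> istopology (hedgehog_open S R zb)"
  unfolding istopology_def by (blast intro: hedgehog_open_Int hedgehog_open_Union)

lemma openin_hedgehog_top:
  assumes "directed_set S R"
  shows "openin (hedgehog_top S R zb) U \<longleftrightarrow> hedgehog_open S R zb U"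
proof -
  have "hedgehog_top S R zb = topology (hedgehog_open S R zb)"
    unfolding hedgehog_top_def hedgehog_open_def ..
  then show ?thesis
    by (simp add: istopology_hedgehog_open[OF assms])
qed

lemma spike_in_hedgehog_carrier: "s \<in> S \<Longrightarrow> z \<in> cball 0 1 \<Longrightarrow> spike zb s z \<in> hedgehog_carrier S zb"
  unfolding spike_def hedgehog_carrier_def by auto

lemma topspace_hedgehog_top:
  assumes "directed_set S R"
  shows "topspace (hedgehog_top S R zb) = hedgehog_carrier S zb"
proof -
  have "hedgehog_open S R zb (hedgehog_carrier S zb)"
    unfolding hedgehog_open_def
  proof (intro conjI ballI impI)
    fix s assume "s \<in> S"
    then have "{z \<in> cball 0 1. spike zb s z \<in> hedgehog_carrier S zb} = topspace (top_of_set (cball 0 1))"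
      using spike_in_hedgehog_carrier by auto
    then show "openin (top_of_set (cball 0 1)) {z \<in> cball 0 1. spike zb s z \<in> hedgehog_carrier S zb}"
      by (metis openin_topspace)
  next
    obtain t where "t \<in> S"
      using assms unfolding directed_set_def by blast
    then show "\<exists>t\<in>S. \<forall>s\<in>S. strictly_above R s t \<longrightarrow> spike zb s ` cball 0 1 \<subseteq> hedgehog_carrier S zb"
      using spike_in_hedgehog_carrier by (intro bexI[of _ t]) auto
  qed simp
  then have "hedgehog_carrier S zb \<subseteq> topspace (hedgehog_top S R zb)"
    by (simp add: openin_hedgehog_top[OF assms] openin_subset)
  moreover have "topspace (hedgehog_top S R zb) \<subseteq> hedgehog_carrier S zb"
    using openin_topspace[of "hedgehog_top S R zb"] hedgehog_openD(1)
    unfolding openin_hedgehog_top[OF assms] by blast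
  ultimately show ?thesis by (rule subset_antisym[rotated])
qed

lemma continuous_map_spike:
  assumes "directed_set S R" "s \<in> S"
  shows "continuous_map (top_of_set (cball 0 1)) (hedgehog_top S R zb) (spike zb s)"
  unfolding continuous_map
proof (intro conjI allI impI)
  show "spike zb s ` topspace (top_of_set (cball 0 1)) \<subseteq> topspace (hedgehog_top S R zb)"
    using spike_in_hedgehog_carrier[OF assms(2)] by (auto simp: topspace_hedgehog_top[OF assms(1)])
next
  fix U assume "openin (hedgehog_top S R zb) U"
  then show "openin (top_of_set (cball 0 1)) {z \<in> topspace (top_of_set (cball 0 1)). spike zb s z \<in> U}"
    using hedgehog_openD(2)[OF _ assms(2)] by (simp add: openin_hedgehog_top[OF assms(1)])
qed

lemma continuous_map_from_hedgehog_top: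
  assumes "directed_set S R"
    and spikes: "\<And>s. s \<in> S \<Longrightarrow> continuous_map (top_of_set (cball 0 1)) Y (F \<circ> spike zb s)"
    and "F None \<in> topspace Y"
    and eventually: "\<And>V. openin Y V \<Longrightarrow> F None \<in> V
      \<Longrightarrow> \<exists>t\<in>S. \<forall>s\<in>S. strictly_above R s t \<longrightarrow> (\<forall>z\<in>cball 0 1. F (spike zb s z) \<in> V)"
  shows "continuous_map (hedgehog_top S R zb) Y F"
  unfolding continuous_map
proof (intro conjI allI impI)
  have "F x \<in> topspace Y" if "x \<in> hedgehog_carrier S zb" for x
  proof (cases x)
    case (Some w)
    with that obtain s z where "s \<in> S" "z \<in> cball 0 1" "x = spike zb s z"
      unfolding hedgehog_carrier_def spike_def by auto
    with spikes[OF \<open>s \<in> S\<close>] show ?thesis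
      by (auto simp: continuous_map_def)
  qed (use assms(3) in simp)
  then show "F ` topspace (hedgehog_top S R zb) \<subseteq> topspace Y"
    by (auto simp: topspace_hedgehog_top[OF assms(1)])
next
  fix V assume V: "openin Y V"
  show "openin (hedgehog_top S R zb) {x \<in> topspace (hedgehog_top S R zb). F x \<in> V}"
    unfolding openin_hedgehog_top[OF assms(1)] topspace_hedgehog_top[OF assms(1)] hedgehog_open_def
  proof (intro conjI ballI impI)
    fix s assume "s \<in> S"
    then have "{z \<in> cball 0 1. spike zb s z \<in> {x \<in> hedgehog_carrier S zb. F x \<in> V}}
        = {z \<in> topspace (top_of_set (cball 0 1)). (F \<circ> spike zb s) z \<in> V}"
      using spike_in_hedgehog_carrier by auto
    with spikes[OF \<open>s \<in> S\<close>] V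
    show "openin (top_of_set (cball 0 1)) {z \<in> cball 0 1. spike zb s z \<in> {x \<in> hedgehog_carrier S zb. F x \<in> V}}"
      unfolding continuous_map by simp
  next
    assume "None \<in> {x \<in> hedgehog_carrier S zb. F x \<in> V}"
    with eventually[OF V] obtain t where "t \<in> S"
      "\<forall>s\<in>S. strictly_above R s t \<longrightarrow> (\<forall>z\<in>cball 0 1. F (spike zb s z) \<in> V)"
      by blast
    with spike_in_hedgehog_carrier[of _ S _ zb]
    show "\<exists>t\<in>S. \<forall>s\<in>S. strictly_above R s t \<longrightarrow> spike zb s ` cball 0 1 \<subseteq> {x \<in> hedgehog_carrier S zb. F x \<in> V}"
      by blast
  qed auto
qed

lemma continuous_map_hedgehog_top_eventually:
  assumes "directed_set S R" "continuous_map (hedgehog_top S R zb) Y g" "openin Y W" "g None \<in> W"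
  shows "\<exists>t\<in>S. \<forall>s\<in>S. strictly_above R s t \<longrightarrow> (\<forall>z\<in>cball 0 1. g (spike zb s z) \<in> W)"
proof -
  have "None \<in> {x \<in> topspace (hedgehog_top S R zb). g x \<in> W}"
    using assms(4) by (simp add: topspace_hedgehog_top[OF assms(1)] hedgehog_carrier_def)
  moreover have "openin (hedgehog_top S R zb) {x \<in> topspace (hedgehog_top S R zb). g x \<in> W}"
    using assms(2,3) unfolding continuous_map by blast
  ultimately obtain t where "t \<in> S"
      "\<forall>s\<in>S. strictly_above R s t \<longrightarrow> spike zb s ` cball 0 1 \<subseteq> {x \<in> topspace (hedgehog_top S R zb). g x \<in> W}"
    using hedgehog_openD(3) unfolding openin_hedgehog_top[OF assms(1)] by meson
  then show ?thesis
    by (auto simp: image_subset_iff)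
qed

section \<open>Lifting maps from retracts of the disk\<close>

lemma P_coveringD:
  assumes "P_covering P E B p" "P X" "x0 \<in> topspace X" "continuous_map X B f"
    "e0 \<in> topspace E" "f x0 = p e0"
  obtains g where "continuous_map X E g" "\<forall>x\<in>topspace X. p (g x) = f x" "g x0 = e0"
    "\<And>g' x. continuous_map X E g' \<Longrightarrow> \<forall>x\<in>topspace X. p (g' x) = f x \<Longrightarrow> g' x0 = e0
      \<Longrightarrow> x \<in> topspace X \<Longrightarrow> g' x = g x"
proof -
  have "\<exists>g. continuous_map X E g \<and> (\<forall>x\<in>topspace X. p (g x) = f x) \<and> g x0 = e0 \<and>
      (\<forall>g'. continuous_map X E g' \<and> (\<forall>x\<in>topspace X. p (g' x) = f x) \<and> g' x0 = e0
         \<longrightarrow> (\<forall>x\<in>topspace X. g' x = g x))"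
    using assms unfolding P_covering_def by blast
  then show thesis
    using that by blast
qed

lemma P_covering_lift_retract:
  assumes cov: "P_covering P E B p" and "P Y" and ret: "retraction_maps Y X r i"
    and "x0 \<in> topspace X" "continuous_map X B f" "e0 \<in> topspace E" "f x0 = p e0"
  obtains g where "continuous_map X E g" "\<forall>x\<in>topspace X. p (g x) = f x" "g x0 = e0"
proof -
  have r: "continuous_map Y X r" and i: "continuous_map X Y i" and ri: "\<forall>x\<in>topspace X. r (i x) = x"
    using ret unfolding retraction_maps_def by auto
  have "i x0 \<in> topspace Y"
    using i \<open>x0 \<in> topspace X\<close> by (simp add: continuous_map_def Pi_iff)
  moreover have "continuous_map Y B (f \<circ> r)"
    using r \<open>continuous_map X B f\<close> by (rule continuous_map_compose)
  moreover have "(f \<circ> r) (i x0) = p e0"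
    using ri assms(4,7) by simp
  ultimately obtain h where h: "continuous_map Y E h" "\<forall>y\<in>topspace Y. p (h y) = (f \<circ> r) y" "h (i x0) = e0"
    using P_coveringD[OF cov \<open>P Y\<close>] \<open>e0 \<in> topspace E\<close> by metis
  show thesis
  proof (rule that)
    show "continuous_map X E (h \<circ> i)"
      using i h(1) by (rule continuous_map_compose)
    show "\<forall>x\<in>topspace X. p ((h \<circ> i) x) = f x"
      using h(2) i ri by (simp add: continuous_map_def Pi_iff)
    show "(h \<circ> i) x0 = e0"
      using h(3) by simp
  qed
qed

lemma P_covering_lift_unique_retract:
  assumes cov: "P_covering P E B p" and "P Y" and ret: "retraction_maps Y X r i"
    and "x0 \<in> topspace X" and g: "continuous_map X E g" and g': "continuous_map X E g'"
    and same_image: "\<forall>x\<in>topspace X. p (g x) = p (g' x)" and "g x0 = g' x0" and "x \<in> topspace X"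
  shows "g x = g' x"
proof -
  have r: "continuous_map Y X r" and i: "continuous_map X Y i" and ri: "\<forall>x\<in>topspace X. r (i x) = x"
    using ret unfolding retraction_maps_def by auto
  have i_in: "i x' \<in> topspace Y" if "x' \<in> topspace X" for x'
    using i that by (simp add: continuous_map_def Pi_iff)
  have r_in: "r y \<in> topspace X" if "y \<in> topspace Y" for y
    using r that by (simp add: continuous_map_def Pi_iff)
  have "continuous_map E B p"
    using cov unfolding P_covering_def by blast
  then have "continuous_map Y B (p \<circ> g \<circ> r)"
    using r g by (blast intro: continuous_map_compose)
  moreover have "g x0 \<in> topspace E"
    using g \<open>x0 \<in> topspace X\<close> by (simp add: continuous_map_def Pi_iff)
  moreover have "(p \<circ> g \<circ> r) (i x0) = p (g x0)"
    using ri \<open>x0 \<in> topspace X\<close> by simp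
  ultimately obtain h where
    h: "\<And>h' y. continuous_map Y E h' \<Longrightarrow> \<forall>y\<in>topspace Y. p (h' y) = (p \<circ> g \<circ> r) y
          \<Longrightarrow> h' (i x0) = g x0 \<Longrightarrow> y \<in> topspace Y \<Longrightarrow> h' y = h y"
    using P_coveringD[OF cov \<open>P Y\<close> i_in[OF \<open>x0 \<in> topspace X\<close>]] by metis
  have "continuous_map Y E (g \<circ> r)" "continuous_map Y E (g' \<circ> r)"
    using r g g' by (blast intro: continuous_map_compose)+
  then have "(g \<circ> r) (i x) = h (i x)" "(g' \<circ> r) (i x) = h (i x)"
    using h[of "g \<circ> r" "i x"] h[of "g' \<circ> r" "i x"] ri i_in r_in same_image
      \<open>g x0 = g' x0\<close> \<open>x0 \<in> topspace X\<close> \<open>x \<in> topspace X\<close>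
    by auto
  then show ?thesis
    using ri \<open>x \<in> topspace X\<close> by simp
qed

definition spike_coordinate :: "complex \<Rightarrow> ('i \<times> complex) option \<Rightarrow> complex" where
  "spike_coordinate z0 x = (case x of None \<Rightarrow> z0 | Some (_, z) \<Rightarrow> z)"

lemma directed_set_singleton: "directed_set {s} (\<lambda>_ _. True)"
  unfolding directed_set_def by simp

lemma retraction_maps_one_spike_hedgehog:
  assumes "z0 \<in> cball 0 1"
  shows "retraction_maps (hedgehog_top {s} (\<lambda>_ _. True) (\<lambda>_. z0)) (top_of_set (cball 0 1))
           (spike_coordinate z0) (spike (\<lambda>_. z0) s)"
proof -
  have coordinate_spike: "spike_coordinate z0 (spike (\<lambda>_. z0) s z) = z" for z
    by (simp add: spike_coordinate_def spike_def)
  have "continuous_map (hedgehog_top {s} (\<lambda>_ _. True) (\<lambda>_. z0)) (top_of_set (cball 0 1)) (spike_coordinate z0)"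
  proof (rule continuous_map_from_hedgehog_top[OF directed_set_singleton])
    show "continuous_map (top_of_set (cball 0 1)) (top_of_set (cball 0 1)) (spike_coordinate z0 \<circ> spike (\<lambda>_. z0) t)"
      if "t \<in> {s}" for t
      using that by (simp add: coordinate_spike o_def)
  qed (use assms in \<open>auto simp: spike_coordinate_def strictly_above_def\<close>)
  then show ?thesis
    unfolding retraction_maps_def
    using continuous_map_spike[OF directed_set_singleton, of s] by (simp add: coordinate_spike)
qed

lemma is_disk_hedgehog_one_spike:
  "z0 \<in> cball 0 1 \<Longrightarrow> is_disk_hedgehog (hedgehog_top {s} (\<lambda>_ _. True) (\<lambda>_. z0))"
  unfolding is_disk_hedgehog_def
  by (intro exI[of _ "{s}"] exI[of _ "\<lambda>_ _. True"] exI[of _ "\<lambda>_. z0"]) (simp add: directed_set_singleton)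

lemma disk_hedgehog_covering_lift:
  fixes E :: "'e topology" and B :: "'b topology"
  assumes cov: "disk_hedgehog_covering E B p" and "retraction_maps (top_of_set (cball (0::complex) 1)) X r i"
    and "x0 \<in> topspace X" "continuous_map X B f" "e0 \<in> topspace E" "f x0 = p e0"
  obtains g where "continuous_map X E g" "\<forall>x\<in>topspace X. p (g x) = f x" "g x0 = e0"
proof -
  have "retraction_maps (hedgehog_top {UNIV :: 'b set} (\<lambda>_ _. True) (\<lambda>_. 0)) X
      (r \<circ> spike_coordinate 0) (spike (\<lambda>_. 0) UNIV \<circ> i)"
    using retraction_maps_compose[OF retraction_maps_one_spike_hedgehog[of 0 UNIV] assms(2)] by simp
  then show thesis
    using P_covering_lift_retract[OF cov[unfolded disk_hedgehog_covering_def]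
        is_disk_hedgehog_one_spike[of 0] _ assms(3-6)] that by auto
qed

lemma disk_hedgehog_covering_lift_unique:
  fixes E :: "'e topology" and B :: "'b topology"
  assumes cov: "disk_hedgehog_covering E B p" and "retraction_maps (top_of_set (cball (0::complex) 1)) X r i"
    and "x0 \<in> topspace X" "continuous_map X E g" "continuous_map X E g'"
    and "\<forall>x\<in>topspace X. p (g x) = p (g' x)" "g x0 = g' x0" "x \<in> topspace X"
  shows "g x = g' x"
proof -
  have "retraction_maps (hedgehog_top {UNIV :: 'b set} (\<lambda>_ _. True) (\<lambda>_. 0)) X
      (r \<circ> spike_coordinate 0) (spike (\<lambda>_. 0) UNIV \<circ> i)"
    using retraction_maps_compose[OF retraction_maps_one_spike_hedgehog[of 0 UNIV] assms(2)] by simp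
  then show ?thesis
    using P_covering_lift_unique_retract[OF cov[unfolded disk_hedgehog_covering_def]
        is_disk_hedgehog_one_spike[of 0] _ assms(3-8)] by auto
qed

lemma retraction_maps_disk_interval:
  "retraction_maps (top_of_set (cball (0::complex) 1)) (top_of_set {0..1})
     (\<lambda>z. (Re z + 1) / 2) (\<lambda>t. complex_of_real (2 * t - 1))"
  unfolding retraction_maps_def
proof (intro conjI)
  have "-1 \<le> Re z \<and> Re z \<le> 1" if "z \<in> cball 0 1" for z :: complex
    using that abs_Re_le_cmod[of z] by (simp add: abs_le_iff)
  then show "continuous_map (top_of_set (cball 0 1)) (top_of_set {0..1}) (\<lambda>z. (Re z + 1) / 2)"
    by (fastforce intro!: continuous_intros)
  have "complex_of_real (2 * t - 1) \<in> cball 0 1" if "t \<in> {0..1}" for t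
    unfolding mem_cball_0 norm_of_real using that by auto
  then show "continuous_map (top_of_set {0..1}) (top_of_set (cball 0 1)) (\<lambda>t. complex_of_real (2 * t - 1))"
    by (auto intro!: continuous_intros)
qed simp

lemma retraction_maps_disk_square:
  "retraction_maps (top_of_set (cball (0::complex) 1))
     (prod_topology (top_of_set {0..1}) (top_of_set {0..1}))
     (\<lambda>z. (max 0 (min 1 (Im z + 1/2)), max 0 (min 1 (Re z + 1/2))))
     (\<lambda>(t, x). Complex (x - 1/2) (t - 1/2))"
  unfolding retraction_maps_def
proof (intro conjI)
  have "cmod (Complex (x - 1/2) (t - 1/2)) \<le> 1" if "t \<in> {0..1}" "x \<in> {0..1}" for t x
  proof -
    have "\<bar>x - 1/2\<bar> + \<bar>t - 1/2\<bar> \<le> 1"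
      using that by auto
    then show ?thesis
      using cmod_le[of "Complex (x - 1/2) (t - 1/2)"] by simp
  qed
  then show "continuous_map (prod_topology (top_of_set {0..1}) (top_of_set {0..1}))
      (top_of_set (cball 0 1)) (\<lambda>(t, x). Complex (x - 1/2) (t - 1/2))"
    by (auto simp: split_def Complex_eq intro!: continuous_intros)
qed (auto intro!: continuous_intros)

section \<open>Path and homotopy lifting\<close>

lemma pathin_in_topspace: "pathin E a \<Longrightarrow> t \<in> {0..1} \<Longrightarrow> a t \<in> topspace E"
  unfolding pathin_def by (simp add: continuous_map_def Pi_iff)

lemma disk_hedgehog_covering_path_lift_unique:
  assumes "disk_hedgehog_covering E B p" "pathin E a" "pathin E a'"
    and "\<forall>t\<in>{0..1}. p (a t) = p (a' t)" "a 0 = a' 0" "t \<in> {0..1}"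
  shows "a t = a' t"
  using disk_hedgehog_covering_lift_unique[OF assms(1) retraction_maps_disk_interval, of 0 a a' t] assms
  by (simp add: pathin_def)

lemma disk_hedgehog_covering_path_lift_const:
  assumes "disk_hedgehog_covering E B p" "pathin E a"
    and "\<forall>t\<in>{0..1}. p (a t) = p (a 0)" "t \<in> {0..1}"
  shows "a t = a 0"
proof -
  have "pathin E (\<lambda>_. a 0)"
    using pathin_in_topspace[OF assms(2)] by (simp add: pathin_def)
  from disk_hedgehog_covering_path_lift_unique[OF assms(1,2) this] show ?thesis
    using assms(3,4) by blast
qed

lemma disk_hedgehog_covering_fibre_eqI:
  assumes cov: "disk_hedgehog_covering E B p" and "e0 \<in> topspace E" "e1 \<in> topspace E" "p e1 = p e0"
    and nbhds: "\<And>W. openin E W \<Longrightarrow> e0 \<in> W \<Longrightarrow> e1 \<in> W"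
  shows "e1 = e0"
proof -
  let ?a = "\<lambda>t::real. if t = 0 then e0 else e1"
  have "openin (top_of_set {0..1}) {t \<in> {0..1}. ?a t \<in> W}" if W: "openin E W" for W
  proof -
    consider "e0 \<in> W" "e1 \<in> W" | "e0 \<notin> W" "e1 \<in> W" | "e1 \<notin> W"
      by blast
    then show ?thesis
    proof cases
      case 1
      then have "{t \<in> {0..1}. ?a t \<in> W} = topspace (top_of_set {0..1})"
        by auto
      then show ?thesis
        by (metis openin_topspace)
    next
      case 2
      then have "{t \<in> {0..1}. ?a t \<in> W} = {0..1} \<inter> {0<..}"
        by auto
      then show ?thesis
        by (metis open_greaterThan openin_open_Int)
    next
      case 3
      with nbhds[OF W] have "{t \<in> {0..1}. ?a t \<in> W} = {}"
        by auto
      then show ?thesis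
        by (metis openin_empty)
    qed
  qed
  then have "pathin E ?a"
    using assms(2,3) unfolding pathin_def continuous_map by auto
  from disk_hedgehog_covering_path_lift_const[OF cov this, of 1] show ?thesis
    using \<open>p e1 = p e0\<close> by simp
qed

lemma disk_hedgehog_covering_homotopic_loops_lift:
  assumes cov: "disk_hedgehog_covering E B p"
    and "homotopic_with (\<lambda>h. h 0 = b0 \<and> h 1 = b0) (top_of_set {0..1}) B \<alpha> \<gamma>"
    and "is_lift E p \<alpha> a" "is_lift E p \<gamma> c" "a 0 = c 0"
  shows "a 1 = c 1"
proof -
  let ?square = "prod_topology (top_of_set {0..1::real}) (top_of_set {0..1::real})"
  obtain H where H: "continuous_map ?square B H" "\<forall>x. H (0, x) = \<alpha> x" "\<forall>x. H (1, x) = \<gamma> x"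
    "\<forall>t\<in>{0..1}. H (t, 0) = b0 \<and> H (t, 1) = b0"
    using assms(2) unfolding homotopic_with_def by auto
  have a: "pathin E a" "\<forall>t\<in>{0..1}. p (a t) = \<alpha> t" and c: "pathin E c" "\<forall>t\<in>{0..1}. p (c t) = \<gamma> t"
    using assms(3,4) unfolding is_lift_def by auto
  obtain G where G: "continuous_map ?square E G" "\<forall>y\<in>topspace ?square. p (G y) = H y" "G (0, 0) = a 0"
    using disk_hedgehog_covering_lift[OF cov retraction_maps_disk_square, of "(0, 0)" H "a 0"]
      H(1,2) a pathin_in_topspace[OF a(1)] by auto
  have lift: "p (G (t, x)) = H (t, x)" if "t \<in> {0..1}" "x \<in> {0..1}" for t x
    using G(2) that by simp
  have horizontal: "pathin E (\<lambda>x. G (t, x))" if "t \<in> {0..1}" for t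
    unfolding pathin_def using that
    by (intro continuous_map_compose[OF _ G(1), unfolded o_def] continuous_intros) auto
  have vertical: "pathin E (\<lambda>t. G (t, x))" if "x \<in> {0..1}" for x
    unfolding pathin_def using that
    by (intro continuous_map_compose[OF _ G(1), unfolded o_def] continuous_intros) auto
  have "G (1, 0) = G (0, 0)"
    using disk_hedgehog_covering_path_lift_const[OF cov vertical, of 0 1] lift H(4) by simp
  have "G (0, 1) = a 1"
    using disk_hedgehog_covering_path_lift_unique[OF cov horizontal a(1), of 0 1] lift H(2) a(2) G(3)
    by simp
  have "G (1, 1) = c 1"
    using disk_hedgehog_covering_path_lift_unique[OF cov horizontal c(1), of 1 1] lift H(3) c(2)
      G(3) \<open>G (1, 0) = G (0, 0)\<close> \<open>a 0 = c 0\<close>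
    by simp
  have "G (1, 1) = G (0, 1)"
    using disk_hedgehog_covering_path_lift_const[OF cov vertical, of 1 1] lift H(4) by simp
  then show ?thesis
    using \<open>G (0, 1) = a 1\<close> \<open>G (1, 1) = c 1\<close> by simp
qed

section \<open>Small loops\<close>

lemma homotopic_loop_const_if_in_every_nbhd:
  assumes "b0 \<in> topspace B" "loop_at B b0 \<beta>"
    and in_nbhds: "\<And>V. openin B V \<Longrightarrow> b0 \<in> V \<Longrightarrow> \<beta> ` {0..1} \<subseteq> V"
  shows "homotopic_with (\<lambda>h. h 0 = b0 \<and> h 1 = b0) (top_of_set {0..1}) B \<beta> (\<lambda>_. b0)"
proof -
  let ?square = "prod_topology (top_of_set {0..1::real}) (top_of_set {0..1::real})"
  define K where "K = (\<lambda>(s::real, x). if s < 1 then \<beta> x else b0)"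
  have \<beta>: "pathin B \<beta>" "\<beta> 0 = b0" "\<beta> 1 = b0"
    using assms(2) unfolding loop_at_def by auto
  have "openin ?square {y \<in> topspace ?square. K y \<in> V}" if V: "openin B V" for V
  proof (cases "b0 \<in> V")
    case True
    then have "{y \<in> topspace ?square. K y \<in> V} = topspace ?square"
      using in_nbhds[OF V] unfolding K_def by auto
    then show ?thesis
      by (metis openin_topspace)
  next
    case False
    then have "{y \<in> topspace ?square. K y \<in> V}
        = ({0..1} \<inter> {..<1}) \<times> {x \<in> topspace (top_of_set {0..1}). \<beta> x \<in> V}"
      unfolding K_def by (auto split: if_splits)
    moreover have "openin (top_of_set {0..1::real}) ({0..1} \<inter> {..<1})"
      by (simp add: openin_open_Int)
    moreover have "openin (top_of_set {0..1}) {x \<in> topspace (top_of_set {0..1}). \<beta> x \<in> V}"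
      using \<beta>(1) V unfolding pathin_def continuous_map by blast
    ultimately show ?thesis
      by (simp only: openin_prod_Times_iff simp_thms)
  qed
  moreover have "K ` topspace ?square \<subseteq> topspace B"
    using pathin_in_topspace[OF \<beta>(1)] assms(1) unfolding K_def by auto
  ultimately have "continuous_map ?square B K"
    unfolding continuous_map by blast
  then show ?thesis
    unfolding homotopic_with_def using \<beta>(2,3) by (intro exI[of _ K]) (auto simp: K_def)
qed

lemma small_loop_lift_closed_if_minimal_nbhd:
  assumes cov: "disk_hedgehog_covering E B p" and "b0 \<in> topspace B"
    and "small_loop B b0 \<alpha>" "is_lift E p \<alpha> a"
    and "openin B T" "b0 \<in> T" and minimal: "\<And>V. openin B V \<Longrightarrow> b0 \<in> V \<Longrightarrow> T \<subseteq> V"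
  shows "a 1 = a 0"
proof -
  let ?P = "\<lambda>h. h 0 = b0 \<and> h 1 = b0"
  obtain \<beta> where \<beta>: "loop_at B b0 \<beta>" "\<beta> ` {0..1} \<subseteq> T" "homotopic_with ?P (top_of_set {0..1}) B \<alpha> \<beta>"
    using assms(3,5,6) unfolding small_loop_def by blast
  have "homotopic_with ?P (top_of_set {0..1}) B \<beta> (\<lambda>_. b0)"
    using homotopic_loop_const_if_in_every_nbhd[OF assms(2) \<beta>(1)] \<beta>(2) minimal by blast
  with \<beta>(3) have "homotopic_with ?P (top_of_set {0..1}) B \<alpha> (\<lambda>_. b0)"
    by (rule homotopic_with_trans)
  moreover have "p (a 0) = b0" "pathin E a"
    using assms(3,4) unfolding small_loop_def loop_at_def is_lift_def by auto
  then have "is_lift E p (\<lambda>_. b0) (\<lambda>_. a 0)"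
    using pathin_in_topspace[of E a 0] unfolding is_lift_def pathin_def by simp
  ultimately show ?thesis
    using disk_hedgehog_covering_homotopic_loops_lift[OF cov _ assms(4)] by fastforce
qed

definition loop_hedgehog_map :: "'b \<Rightarrow> ('i \<Rightarrow> real \<Rightarrow> 'b) \<Rightarrow> ('i \<times> complex) option \<Rightarrow> 'b" where
  "loop_hedgehog_map b0 \<beta> x = (case x of None \<Rightarrow> b0 | Some (s, z) \<Rightarrow> \<beta> s ((Re z + 1) / 2))"

lemma loop_hedgehog_map_spike:
  "\<beta> s 0 = b0 \<Longrightarrow> loop_hedgehog_map b0 \<beta> (spike (\<lambda>_. -1) s z) = \<beta> s ((Re z + 1) / 2)"
  by (simp add: loop_hedgehog_map_def spike_def)

lemma continuous_map_loop_hedgehog_map: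
  assumes "directed_set S R" "b0 \<in> topspace B"
    and loops: "\<And>s. s \<in> S \<Longrightarrow> pathin B (\<beta> s) \<and> \<beta> s 0 = b0"
    and shrinking: "\<And>V. openin B V \<Longrightarrow> b0 \<in> V \<Longrightarrow> \<exists>t\<in>S. \<forall>s\<in>S. strictly_above R s t \<longrightarrow> \<beta> s ` {0..1} \<subseteq> V"
  shows "continuous_map (hedgehog_top S R (\<lambda>_. -1)) B (loop_hedgehog_map b0 \<beta>)"
proof (rule continuous_map_from_hedgehog_top[OF assms(1)])
  have interval: "continuous_map (top_of_set (cball (0::complex) 1)) (top_of_set {0..1}) (\<lambda>z. (Re z + 1) / 2)"
    using retraction_maps_disk_interval unfolding retraction_maps_def by blast
  fix s assume "s \<in> S"
  then have "continuous_map (top_of_set (cball 0 1)) B (\<beta> s \<circ> (\<lambda>z. (Re z + 1) / 2))"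
    using continuous_map_compose[OF interval] loops unfolding pathin_def by blast
  then show "continuous_map (top_of_set (cball 0 1)) B (loop_hedgehog_map b0 \<beta> \<circ> spike (\<lambda>_. -1) s)"
    using loops[OF \<open>s \<in> S\<close>] by (auto simp: loop_hedgehog_map_spike elim!: continuous_map_eq)
next
  fix V assume "openin B V" "loop_hedgehog_map b0 \<beta> None \<in> V"
  then obtain t where "t \<in> S" "\<forall>s\<in>S. strictly_above R s t \<longrightarrow> \<beta> s ` {0..1} \<subseteq> V"
    using shrinking[of V] by (auto simp: loop_hedgehog_map_def)
  moreover have "(Re z + 1) / 2 \<in> {0..1}" if "z \<in> cball 0 1" for z :: complex
    using that abs_Re_le_cmod[of z] by (simp add: abs_le_iff)
  ultimately show "\<exists>t\<in>S. \<forall>s\<in>S. strictly_above R s t \<longrightarrow>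
      (\<forall>z\<in>cball 0 1. loop_hedgehog_map b0 \<beta> (spike (\<lambda>_. -1) s z) \<in> V)"
    using loops by (intro bexI[of _ t]) (auto simp: loop_hedgehog_map_spike image_subset_iff)
qed (simp add: loop_hedgehog_map_def assms(2))

lemma is_lift_spike_path:
  assumes "directed_set S R" "s \<in> S" "\<beta> s 0 = b0"
    and g: "continuous_map (hedgehog_top S R (\<lambda>_. -1)) E g"
    and lift: "\<forall>x\<in>topspace (hedgehog_top S R (\<lambda>_. -1)). p (g x) = loop_hedgehog_map b0 \<beta> x"
  shows "is_lift E p (\<beta> s) (\<lambda>t. g (spike (\<lambda>_. -1) s (complex_of_real (2 * t - 1))))"
proof -
  have interval: "continuous_map (top_of_set {0..1}) (top_of_set (cball (0::complex) 1)) (\<lambda>t. complex_of_real (2 * t - 1))"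
    and "\<forall>t\<in>{0..1}. (Re (complex_of_real (2 * t - 1)) + 1) / 2 = t"
    using retraction_maps_disk_interval unfolding retraction_maps_def by auto
  moreover have "complex_of_real (2 * t - 1) \<in> cball 0 1" if "t \<in> {0..1}" for t
    using interval that by (simp add: continuous_map_def Pi_iff)
  ultimately show ?thesis
    unfolding is_lift_def pathin_def
    using continuous_map_compose[OF continuous_map_compose[OF interval continuous_map_spike[OF assms(1,2)]] g]
      lift spike_in_hedgehog_carrier[OF assms(2)]
    by (auto simp: o_def topspace_hedgehog_top[OF assms(1)] loop_hedgehog_map_spike[of \<beta> s, OF assms(3)])
qed

lemma loop_hedgehog_lift_spike_end:
  assumes cov: "disk_hedgehog_covering E B p" and "directed_set S R" "s \<in> S" "\<beta> s 0 = b0"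
    and "homotopic_with (\<lambda>h. h 0 = b0 \<and> h 1 = b0) (top_of_set {0..1}) B \<alpha> (\<beta> s)"
    and a: "is_lift E p \<alpha> a"
    and g: "continuous_map (hedgehog_top S R (\<lambda>_. -1)) E g"
      "\<forall>x\<in>topspace (hedgehog_top S R (\<lambda>_. -1)). p (g x) = loop_hedgehog_map b0 \<beta> x" "g None = a 0"
  shows "g (spike (\<lambda>_. -1) s 1) = a 1"
proof -
  have "is_lift E p (\<beta> s) (\<lambda>t. g (spike (\<lambda>_. -1) s (complex_of_real (2 * t - 1))))"
    by (rule is_lift_spike_path[OF assms(2-4) g(1,2)])
  moreover have "g (spike (\<lambda>_. -1) s (complex_of_real (2 * 0 - 1))) = a 0"
    using g(3) by (simp add: spike_def)
  ultimately show ?thesis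
    using disk_hedgehog_covering_homotopic_loops_lift[OF cov assms(5) a] by fastforce
qed

lemma directed_set_nbhds:
  "b0 \<in> topspace B \<Longrightarrow> directed_set {U. openin B U \<and> b0 \<in> U} (\<lambda>U V. V \<subseteq> U)"
  unfolding directed_set_def by (auto intro: exI[of _ "topspace B"])

lemma small_loop_lift_closed_if_no_minimal_nbhd:
  fixes E :: "'e topology" and B :: "'b topology"
  assumes cov: "disk_hedgehog_covering E B p" and b0: "b0 \<in> topspace B"
    and small: "small_loop B b0 \<alpha>" and a: "is_lift E p \<alpha> a"
    and no_minimal: "\<And>T. openin B T \<Longrightarrow> b0 \<in> T \<Longrightarrow> \<exists>U. openin B U \<and> b0 \<in> U \<and> U \<subset> T"
  shows "a 1 = a 0"
proof -
  let ?P = "\<lambda>h. h 0 = b0 \<and> h 1 = b0"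
  define S where "S = {U. openin B U \<and> b0 \<in> U}"
  define R :: "'b set \<Rightarrow> 'b set \<Rightarrow> bool" where "R = (\<lambda>U V. V \<subseteq> U)"
  let ?H = "hedgehog_top S R (\<lambda>_. -1)"
  have dir: "directed_set S R"
    unfolding S_def R_def using b0 by (rule directed_set_nbhds)
  obtain \<beta> where \<beta>: "\<forall>U\<in>S. loop_at B b0 (\<beta> U) \<and> \<beta> U ` {0..1} \<subseteq> U
      \<and> homotopic_with ?P (top_of_set {0..1}) B \<alpha> (\<beta> U)"
    using small unfolding small_loop_def S_def by (metis (no_types, lifting) mem_Collect_eq)
  have f: "continuous_map ?H B (loop_hedgehog_map b0 \<beta>)"
  proof (rule continuous_map_loop_hedgehog_map[OF dir b0])
    show "pathin B (\<beta> s) \<and> \<beta> s 0 = b0" if "s \<in> S" for s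
      using \<beta> that unfolding loop_at_def by blast
    show "\<exists>t\<in>S. \<forall>s\<in>S. strictly_above R s t \<longrightarrow> \<beta> s ` {0..1} \<subseteq> V" if "openin B V" "b0 \<in> V" for V
      using \<beta> that unfolding S_def R_def strictly_above_def by (intro bexI[of _ V]) auto
  qed
  have H: "is_disk_hedgehog ?H"
    unfolding is_disk_hedgehog_def using dir by (intro exI[of _ S] exI[of _ R] exI[of _ "\<lambda>_. -1"]) simp
  have None: "None \<in> topspace ?H"
    by (simp add: topspace_hedgehog_top[OF dir] hedgehog_carrier_def)
  have "p (a 0) = b0" "pathin E a"
    using small a unfolding small_loop_def loop_at_def is_lift_def by auto
  then have a0: "a 0 \<in> topspace E" "loop_hedgehog_map b0 \<beta> None = p (a 0)"
    using pathin_in_topspace[of E a 0] by (auto simp: loop_hedgehog_map_def)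
  obtain g where g: "continuous_map ?H E g"
    "\<forall>x\<in>topspace ?H. p (g x) = loop_hedgehog_map b0 \<beta> x" "g None = a 0"
    by (rule P_coveringD[OF cov[unfolded disk_hedgehog_covering_def] H None f a0])
  have spike_end: "g (spike (\<lambda>_. -1) s 1) = a 1" if "s \<in> S" for s
    using \<beta> that unfolding loop_at_def
    by (blast intro: loop_hedgehog_lift_spike_end[OF cov dir that _ _ a g])
  \<comment> \<open>No neighbourhood of b0 is minimal, so above every index there is a strictly larger one.\<close>
  have "a 1 \<in> W" if W: "openin E W" "a 0 \<in> W" for W
  proof -
    obtain t where "t \<in> S" "\<forall>s\<in>S. strictly_above R s t \<longrightarrow> (\<forall>z\<in>cball 0 1. g (spike (\<lambda>_. -1) s z) \<in> W)"
      using continuous_map_hedgehog_top_eventually[OF dir g(1) W(1)] g(3) W(2) by auto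
    moreover obtain s where "s \<in> S" "strictly_above R s t"
      using no_minimal[of t] \<open>t \<in> S\<close> unfolding S_def R_def strictly_above_def by blast
    ultimately have "g (spike (\<lambda>_. -1) s 1) \<in> W"
      by simp
    then show ?thesis
      using spike_end[OF \<open>s \<in> S\<close>] by simp
  qed
  then show ?thesis
    using disk_hedgehog_covering_fibre_eqI[OF cov] pathin_in_topspace[OF \<open>pathin E a\<close>]
      a small unfolding is_lift_def small_loop_def loop_at_def by simp
qed

lemma disk_hedgehog_covering_small_loop_lift_closed:
  assumes cov: "disk_hedgehog_covering E B p" and "b0 \<in> topspace B"
    and "small_loop B b0 \<alpha>" "is_lift E p \<alpha> a"
  shows "a 1 = a 0"
proof (cases "\<exists>T. openin B T \<and> b0 \<in> T \<and> (\<forall>V. openin B V \<and> b0 \<in> V \<longrightarrow> T \<subseteq> V)")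
  case True
  then obtain T where "openin B T" "b0 \<in> T" "\<And>V. openin B V \<Longrightarrow> b0 \<in> V \<Longrightarrow> T \<subseteq> V"
    by blast
  then show ?thesis
    by (rule small_loop_lift_closed_if_minimal_nbhd[OF assms])
next
  case False
  have "\<exists>U. openin B U \<and> b0 \<in> U \<and> U \<subset> T" if T: "openin B T" "b0 \<in> T" for T
  proof -
    obtain V where "openin B V" "b0 \<in> V" "\<not> T \<subseteq> V"
      using False T by blast
    then show ?thesis
      using T by (intro exI[of _ "T \<inter> V"]) auto
  qed
  then show ?thesis
    by (rule small_loop_lift_closed_if_no_minimal_nbhd[OF assms])
qed

theorem proposition7p8:
  fixes B :: "'b topology" and E :: "'e topology" and p :: "'e \<Rightarrow> 'b"
    and b0 :: 'b and \<alpha> :: "real \<Rightarrow> 'b"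
  assumes "path_connected_space B"
    and "b0 \<in> topspace B"
    and "disk_hedgehog_covering E B p"
    and "small_loop B b0 \<alpha>"
  shows "monodromy_neutral E p \<alpha> \<and> monodromy_equiv E p \<alpha> (\<lambda>t. b0)"
proof
  show "monodromy_neutral E p \<alpha>"
    unfolding monodromy_neutral_def
    using disk_hedgehog_covering_small_loop_lift_closed[OF assms(3,2,4)] by blast
  show "monodromy_equiv E p \<alpha> (\<lambda>t. b0)"
    unfolding monodromy_equiv_def
  proof (intro allI impI)
    fix a c assume lifts: "is_lift E p \<alpha> a \<and> is_lift E p (\<lambda>t. b0) c \<and> a 0 = c 0"
    then have "a 1 = a 0"
      using disk_hedgehog_covering_small_loop_lift_closed[OF assms(3,2,4)] by blast
    moreover have "c 1 = c 0"
      using disk_hedgehog_covering_path_lift_const[OF assms(3), of c 1] lifts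
      unfolding is_lift_def by simp
    ultimately show "a 1 = c 1"
      using lifts by simp
  qed
qed

end
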